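(* Let $\varphi_{nc}(z)=\dfrac{1+z}{\cos z}$. For every $r\in(0,1)$, $$\min_{|z|=r}\operatorname{Re}\varphi_{nc}(z)=\varphi_{nc}(-r)\quad\text{and}\quad \max_{|z|=r}\operatorname{Re}\varphi_{nc}(z)=\varphi_{nc}(r).$$ *)

theory Defs
  imports "HOL-Analysis.Analysis"
begin

definition phi_nc :: "complex \<Rightarrow> complex" where
  "phi_nc z = (1 + z) / cos z"

end

theory Submission
  imports Defs
begin

(*
  Write z = x + i y with x^2 + y^2 = r^2; since phi_nc commutes with conjugation we may take y >= 0.
  The upper bound follows from |1 + z| <= 1 + r and |cos z| >= Re (cos z) = cos x cosh y >= cos r.
  For the lower bound, Re (phi_nc z) = N / D with N = (1 + x) cos x cosh y - y sin x sinh y and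
  D = cos^2 x + sinh^2 y.  Elementary Taylor bounds for cos, sin, cosh and sinh bound N from below
  and D from above by polynomials in x, u = y^2 = r^2 - x^2 and p = cos r, and the resulting
  polynomial form of cos r * N - (1 - r) * D factors as (r + x) times a quadratic in x, the
  lower_defect.  Its nonnegativity on [-r, 0] and on [0, r] follows from its values at the
  endpoints and a midpoint condition; these are polynomial inequalities in r and p that are
  monotone in p on [1 - r^2/2, cos r], and at p = 1 - r^2/2 they become polynomials in r whose
  Bernstein coefficients on [0, 1] are nonnegative.
*)

lemma cos_ge_one_minus_square_half: "1 - t\<^sup>2 / 2 \<le> cos (t::real)"
proof -
  have "\<bar>sin (t / 2)\<bar> \<le> \<bar>t / 2\<bar>" by (rule abs_sin_x_le_abs_x)
  then have "(sin (t / 2))\<^sup>2 \<le> (t / 2)\<^sup>2" by (metis power2_abs abs_ge_zero power_mono)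
  moreover have "cos t = 1 - 2 * (sin (t / 2))\<^sup>2" using cos_double_sin[of "t / 2"] by simp
  ultimately show ?thesis by (simp add: power_divide)
qed

lemma cosh_ge_one_plus_square_half: "1 + y\<^sup>2 / 2 \<le> cosh (y::real)"
proof -
  have "\<bar>y / 2\<bar> \<le> \<bar>sinh (y / 2)\<bar>"
    using real_le_abs_sinh[of "y / 2"] by (simp add: sinh_field_def exp_minus)
  then have "(y / 2)\<^sup>2 \<le> (sinh (y / 2))\<^sup>2" by (metis power2_abs abs_ge_zero power_mono)
  moreover have "cosh y = 1 + 2 * (sinh (y / 2))\<^sup>2"
    using cosh_double[of "y / 2"] by (simp add: cosh_square_eq)
  ultimately show ?thesis by (simp add: power_divide)
qed

lemma sinh_ge_self: "0 \<le> y \<Longrightarrow> y \<le> sinh (y::real)"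
  using real_le_x_sinh by (simp add: sinh_field_def exp_minus)

lemma sinh_le_add_square_half:
  fixes y :: real
  assumes "0 \<le> y" "y \<le> 1"
  shows "sinh y \<le> y + y\<^sup>2 / 2"
  using exp_bound[OF assms] exp_ge_add_one_self[of "- y"] by (simp add: sinh_field_def)

lemma sin_ge_cubic_Taylor:
  fixes t :: real
  assumes "0 \<le> t"
  shows "t - t ^ 3 / 6 \<le> sin t"
proof -
  have "sin 0 - 0 + 0 ^ 3 / 6 \<le> sin t - t + t ^ 3 / 6"
  proof (rule DERIV_nonneg_imp_nondecreasing[OF assms])
    fix s
    show "\<exists>d. ((\<lambda>t. sin t - t + t ^ 3 / 6) has_real_derivative d) (at s) \<and> 0 \<le> d"
      using cos_ge_one_minus_square_half[of s]
      by (intro exI[of _ "cos s - 1 + s\<^sup>2 / 2"] conjI)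
         (auto intro!: derivative_eq_intros simp: power2_eq_square)
  qed
  then show ?thesis by simp
qed

lemma sin_ge_five_sixths:
  fixes t :: real
  assumes "0 \<le> t" "t \<le> 1"
  shows "5/6 * t \<le> sin t"
proof -
  have "t * t\<^sup>2 \<le> t * 1" using assms by (intro mult_left_mono) (auto simp: power_le_one)
  then show ?thesis
    using sin_ge_cubic_Taylor[OF assms(1)] by (simp add: power3_eq_cube power2_eq_square)
qed

lemma cos_ge_cos_add_square_diff:
  fixes x r :: real
  assumes "\<bar>x\<bar> \<le> r" "r \<le> 1"
  shows "cos r + 25/72 * (r\<^sup>2 - x\<^sup>2) \<le> cos x"
proof -
  define v w where "v = (x + r) / 2" and "w = (r - x) / 2"
  have v: "0 \<le> v" "v \<le> 1" and w: "0 \<le> w" "w \<le> 1" using assms by (auto simp: v_def w_def)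
  have "5/6 * v * (5/6 * w) \<le> sin v * sin w"
    using sin_ge_five_sixths[OF v] sin_ge_five_sixths[OF w] v w by (intro mult_mono) auto
  moreover have "cos x - cos r = 2 * sin v * sin w"
    using cos_diff_cos[of x r] by (simp add: v_def w_def)
  moreover have "r\<^sup>2 - x\<^sup>2 = 4 * v * w" unfolding v_def w_def by algebra
  ultimately show ?thesis by simp
qed

lemma cos_square_diff_le:
  fixes x r :: real
  assumes "\<bar>x\<bar> \<le> r" "r \<le> pi / 2"
  shows "(cos x)\<^sup>2 - (cos r)\<^sup>2 \<le> r\<^sup>2 - x\<^sup>2"
proof -
  have "(cos x)\<^sup>2 - (cos r)\<^sup>2 = (sin r * cos x)\<^sup>2 - (cos r * sin x)\<^sup>2"
    by (simp add: sin_squared_eq algebra_simps)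
  also have "\<dots> = sin (r + x) * sin (r - x)"
    by (simp add: sin_add sin_diff algebra_simps power2_eq_square)
  also have "\<dots> \<le> (r + x) * (r - x)"
    using assms sin_x_le_x[of "r + x"] sin_x_le_x[of "r - x"] sin_ge_zero[of "r - x"]
    by (intro mult_mono) auto
  also have "\<dots> = r\<^sup>2 - x\<^sup>2" by (simp add: power2_eq_square algebra_simps)
  finally show ?thesis .
qed

lemma cos_mult_cosh_ge:
  fixes x y r :: real
  assumes "x\<^sup>2 + y\<^sup>2 = r\<^sup>2" "\<bar>x\<bar> \<le> r" "r \<le> 1"
  shows "cos r * (1 + y\<^sup>2 / 2) + 25/72 * y\<^sup>2 \<le> cos x * cosh y"
proof -
  have "0 \<le> cos r" using assms pi_gt3 by (intro cos_ge_zero) auto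
  have "y\<^sup>2 = r\<^sup>2 - x\<^sup>2" using assms(1) by simp
  then have "cos r + 25/72 * y\<^sup>2 \<le> cos x"
    using cos_ge_cos_add_square_diff[OF assms(2,3)] by simp
  moreover have "0 \<le> cos r + 25/72 * y\<^sup>2" using \<open>0 \<le> cos r\<close> by simp
  ultimately have "(cos r + 25/72 * y\<^sup>2) * (1 + y\<^sup>2 / 2) \<le> cos x * cosh y"
    using cosh_ge_one_plus_square_half[of y] by (intro mult_mono) auto
  moreover have "cos r * (1 + y\<^sup>2 / 2) + 25/72 * y\<^sup>2 \<le> (cos r + 25/72 * y\<^sup>2) * (1 + y\<^sup>2 / 2)"
    by (simp add: algebra_simps)
  ultimately show ?thesis by linarith
qed

lemma sin_mult_sinh_le_of_nonpos:
  fixes x y :: real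
  assumes "- 1 \<le> x" "x \<le> 0" "0 \<le> y"
  shows "y * sin x * sinh y \<le> 5/6 * x * y\<^sup>2"
proof -
  have "5/6 * (- x) * (y * y) \<le> sin (- x) * (y * sinh y)"
    using assms sin_ge_five_sixths[of "- x"] sinh_ge_self[of y]
    by (intro mult_mono mult_left_mono) auto
  then show ?thesis by (simp add: power2_eq_square algebra_simps)
qed

lemma sin_mult_sinh_le_of_nonneg:
  fixes x y :: real
  assumes "0 \<le> x" "0 \<le> y" "y \<le> 1"
  shows "y * sin x * sinh y \<le> x * y\<^sup>2 * (1 + y / 2)"
proof -
  have "y * sinh y \<le> y\<^sup>2 * (1 + y / 2)"
    using mult_left_mono[OF sinh_le_add_square_half[OF assms(2,3)] assms(2)]
    by (simp add: power2_eq_square algebra_simps)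
  moreover have "0 \<le> y * sinh y" using assms by simp
  ultimately have "sin x * (y * sinh y) \<le> x * (y\<^sup>2 * (1 + y / 2))"
    using assms sin_x_le_x[of x]
    by (cases "0 \<le> sin x") (auto intro: mult_mono order_trans[OF mult_nonpos_nonneg])
  then show ?thesis by (simp add: algebra_simps)
qed

lemma cos_square_plus_sinh_square_le:
  fixes x y r :: real
  assumes "x\<^sup>2 + y\<^sup>2 = r\<^sup>2" "\<bar>x\<bar> \<le> r" "0 \<le> y" "y \<le> r" "r \<le> 1"
  shows "(cos x)\<^sup>2 + (sinh y)\<^sup>2 \<le> (cos r)\<^sup>2 + y\<^sup>2 * (2 + r + r\<^sup>2 / 4)"
proof -
  have "(cos x)\<^sup>2 \<le> (cos r)\<^sup>2 + y\<^sup>2"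
    using cos_square_diff_le[of x r] assms pi_gt3 by simp
  moreover have "y * y \<le> r * y" using assms by (intro mult_right_mono) auto
  then have "sinh y \<le> y * (1 + r / 2)"
    using sinh_le_add_square_half[of y] assms by (simp add: power2_eq_square algebra_simps)
  then have "(sinh y)\<^sup>2 \<le> y\<^sup>2 * (1 + r / 2)\<^sup>2"
    using assms by (simp add: power_mono flip: power_mult_distrib)
  ultimately show ?thesis by (simp add: power2_eq_square algebra_simps)
qed

lemma quadratic_lower_bound_mono:
  fixes a b m q p :: real
  assumes "q \<le> p" "m \<le> a * q\<^sup>2 + b * q" "0 \<le> a * (p + q) + b"
  shows "m \<le> a * p\<^sup>2 + b * p"
proof -
  have "a * p\<^sup>2 + b * p - (a * q\<^sup>2 + b * q) = (p - q) * (a * (p + q) + b)"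
    by (simp add: algebra_simps power2_eq_square)
  also have "\<dots> \<ge> 0" using assms by simp
  finally show ?thesis using assms(2) by simp
qed

lemma quadratic_nonneg_on_interval:
  fixes a b c t L :: real
  assumes t: "0 \<le> t" "t \<le> L"
    and at_0: "0 \<le> c" and at_L: "0 \<le> c + a * L + b * L\<^sup>2" and mid: "0 \<le> 2 * c + a * L"
  shows "0 \<le> c + a * t + b * t\<^sup>2"
proof (cases "b \<le> 0")
  case True
  have "L * (c + a * t + b * t\<^sup>2) - ((L - t) * c + t * (c + a * L + b * L\<^sup>2))
          = (- b) * t * L * (L - t)"
    by (simp add: algebra_simps power2_eq_square)
  also have "\<dots> \<ge> 0" using True t by (intro mult_nonneg_nonneg) auto
  finally have "(L - t) * c + t * (c + a * L + b * L\<^sup>2) \<le> L * (c + a * t + b * t\<^sup>2)" by simp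
  moreover have "0 \<le> (L - t) * c + t * (c + a * L + b * L\<^sup>2)" using t at_0 at_L by simp
  ultimately have "0 \<le> L * (c + a * t + b * t\<^sup>2)" by linarith
  then show ?thesis using t at_0 by (cases "L = 0") (auto simp: zero_le_mult_iff)
next
  case False
  consider "0 \<le> a" | "a < 0" "a + 2 * b * L \<le> 0" | "a < 0" "0 < a + 2 * b * L" by linarith
  then show ?thesis
  proof cases
    case 1
    then show ?thesis using False t at_0 by simp
  next
    case 2
    have "b * (t + L) \<le> b * (2 * L)" using False t by (intro mult_left_mono) auto
    then have "0 \<le> (L - t) * (- (a + b * (t + L)))" using 2 t by simp
    also have "\<dots> = c + a * t + b * t\<^sup>2 - (c + a * L + b * L\<^sup>2)"
      by (simp add: algebra_simps power2_eq_square)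
    finally show ?thesis using at_L by simp
  next
    case 3
    have "a * a \<le> a * (- (2 * b * L))" using 3 by (intro mult_left_mono_neg) auto
    then have "0 \<le> 2 * b * (2 * c + a * L) + ((- a) * (2 * b * L) - a\<^sup>2) + (2 * b * t + a)\<^sup>2"
      using False mid by (simp add: power2_eq_square)
    also have "\<dots> = 4 * b * (c + a * t + b * t\<^sup>2)"
      by (simp add: algebra_simps power2_eq_square)
    finally show ?thesis using False by (simp add: zero_le_mult_iff)
  qed
qed

definition lower_defect :: "real \<Rightarrow> real \<Rightarrow> real \<Rightarrow> real \<Rightarrow> real" where
  "lower_defect s r p x =
     p\<^sup>2 + (r - x) * (p * (1 + x) * (p / 2 + 25/72) - s * p * x - (1 - r) * (2 + r + r\<^sup>2 / 4))"

lemma lower_estimate_eq_lower_defect: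
  fixes s r p x u :: real
  assumes "u = r\<^sup>2 - x\<^sup>2"
  shows "p * ((1 + x) * (p * (1 + u / 2) + 25/72 * u) - s * x * u)
             - (1 - r) * (p\<^sup>2 + u * (2 + r + r\<^sup>2 / 4))
           = (r + x) * lower_defect s r p x"
  unfolding assms lower_defect_def by (simp add: algebra_simps power2_eq_square)

(* In the next four proofs the first inequality is the Bernstein expansion on [0, 1] of the
   claim at p = 1 - r^2/2, multiplied by a constant. *)

lemma lower_defect_at_0_ineq:
  fixes r p :: real
  assumes r: "0 \<le> r" "r \<le> 1" and p: "1 - r\<^sup>2 / 2 \<le> p"
  shows "r * (1 - r) * (2 + r + r\<^sup>2 / 4)
           \<le> (1 + r / 2) * p\<^sup>2 + 25/72 * r * p"
    (is "?M \<le> ?a * _ + ?b * _")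
proof (rule quadratic_lower_bound_mono[OF p])
  let ?q = "1 - r\<^sup>2 / 2"
  have "0 \<le> 144 * (1 - r) ^ 5 + 554 * r * (1 - r) ^ 4 + 776 * r ^ 2 * (1 - r) ^ 3
              + 455 * r ^ 3 * (1 - r) ^ 2 + 150 * r ^ 4 * (1 - r) + 79 * r ^ 5"
    using r by (intro add_nonneg_nonneg mult_nonneg_nonneg zero_le_power) auto
  also have "\<dots> = 144 * (?a * ?q\<^sup>2 + ?b * ?q - ?M)"
    by (simp add: field_simps power2_eq_square power3_eq_cube power_numeral_even power_numeral_odd)
  finally show "?M \<le> ?a * ?q\<^sup>2 + ?b * ?q" by (simp add: zero_le_mult_iff)
  have "r\<^sup>2 \<le> 1" using r by (simp add: power_le_one)
  then show "0 \<le> ?a * (p + ?q) + ?b" using p r by (intro add_nonneg_nonneg mult_nonneg_nonneg) auto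
qed

lemma lower_defect_at_minus_r_ineq:
  fixes r p :: real
  assumes r: "0 \<le> r" "r \<le> 1" and p: "1 - r\<^sup>2 / 2 \<le> p"
  shows "2 * r * (1 - r) * (2 + r + r\<^sup>2 / 4)
           \<le> (1 + r - r\<^sup>2) * p\<^sup>2 + (25/36 * r + 35/36 * r\<^sup>2) * p"
    (is "?M \<le> ?a * _ + ?b * _")
proof (rule quadratic_lower_bound_mono[OF p])
  let ?q = "1 - r\<^sup>2 / 2"
  have "0 \<le> 72 * (1 - r) ^ 7 + 338 * r * (1 - r) ^ 6 + 586 * r ^ 2 * (1 - r) ^ 5
              + 391 * r ^ 3 * (1 - r) ^ 4 + 35 * r ^ 4 * (1 - r) ^ 3 + 79 * r ^ 5 * (1 - r) ^ 2
              + 193 * r ^ 6 * (1 - r) + 78 * r ^ 7"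
    using r by (intro add_nonneg_nonneg mult_nonneg_nonneg zero_le_power) auto
  also have "\<dots> = 72 * (?a * ?q\<^sup>2 + ?b * ?q - ?M)"
    by (simp add: field_simps power2_eq_square power3_eq_cube power_numeral_even power_numeral_odd)
  finally show "?M \<le> ?a * ?q\<^sup>2 + ?b * ?q" by (simp add: zero_le_mult_iff)
  have "r\<^sup>2 \<le> 1" using r by (simp add: power_le_one)
  then show "0 \<le> ?a * (p + ?q) + ?b" using p r by (intro add_nonneg_nonneg mult_nonneg_nonneg) auto
qed

lemma lower_defect_left_mid_ineq:
  fixes r p :: real
  assumes r: "0 \<le> r" "r \<le> 1" and p: "1 - r\<^sup>2 / 2 \<le> p"
  shows "3 * r * (1 - r) * (2 + r + r\<^sup>2 / 4)
           \<le> (2 + 3/2 * r - r\<^sup>2 / 2) * p\<^sup>2 + (25/24 * r + 35/72 * r\<^sup>2) * p"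
    (is "?M \<le> ?a * _ + ?b * _")
proof (rule quadratic_lower_bound_mono[OF p])
  let ?q = "1 - r\<^sup>2 / 2"
  have "0 \<le> 288 * (1 - r) ^ 6 + 1230 * r * (1 - r) ^ 5 + 1972 * r ^ 2 * (1 - r) ^ 4
              + 1381 * r ^ 3 * (1 - r) ^ 3 + 508 * r ^ 4 * (1 - r) ^ 2 + 393 * r ^ 5 * (1 - r) + 218 * r ^ 6"
    using r by (intro add_nonneg_nonneg mult_nonneg_nonneg zero_le_power) auto
  also have "\<dots> = 144 * (?a * ?q\<^sup>2 + ?b * ?q - ?M)"
    by (simp add: field_simps power2_eq_square power3_eq_cube power_numeral_even power_numeral_odd)
  finally show "?M \<le> ?a * ?q\<^sup>2 + ?b * ?q" by (simp add: zero_le_mult_iff)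
  have "r\<^sup>2 \<le> 1" using r by (simp add: power_le_one)
  then show "0 \<le> ?a * (p + ?q) + ?b" using p r by (intro add_nonneg_nonneg mult_nonneg_nonneg) auto
qed

lemma lower_defect_right_mid_ineq:
  fixes r p :: real
  assumes r: "0 \<le> r" "r \<le> 1" and p: "1 - r\<^sup>2 / 2 \<le> p"
  shows "r * (1 - r) * (2 + r + r\<^sup>2 / 4)
           \<le> (2 + r / 2 + r\<^sup>2 / 2) * p\<^sup>2 + (25/72 * r - 47/72 * r\<^sup>2 - r ^ 3 / 2) * p"
    (is "?M \<le> ?a * _ + ?b * _")
proof (rule quadratic_lower_bound_mono[OF p])
  let ?q = "1 - r\<^sup>2 / 2"
  have "0 \<le> 288 * (1 - r) ^ 6 + 1562 * r * (1 - r) ^ 5 + 3324 * r ^ 2 * (1 - r) ^ 4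
              + 3375 * r ^ 3 * (1 - r) ^ 3 + 1564 * r ^ 4 * (1 - r) ^ 2 + 271 * r ^ 5 * (1 - r) + 50 * r ^ 6"
    using r by (intro add_nonneg_nonneg mult_nonneg_nonneg zero_le_power) auto
  also have "\<dots> = 144 * (?a * ?q\<^sup>2 + ?b * ?q - ?M)"
    by (simp add: field_simps power2_eq_square power3_eq_cube power_numeral_even power_numeral_odd)
  finally show "?M \<le> ?a * ?q\<^sup>2 + ?b * ?q" by (simp add: zero_le_mult_iff)
  have "r\<^sup>2 \<le> 1" "r ^ 3 \<le> 1" using r by (simp_all add: power_le_one)
  moreover from this have "?a * 1 \<le> ?a * (p + ?q)" using p r by (intro mult_left_mono) auto
  ultimately show "0 \<le> ?a * (p + ?q) + ?b" using r by simp
qed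

lemma lower_defect_nonneg_left:
  fixes r p x :: real
  assumes r: "0 \<le> r" "r \<le> 1" and p: "1 - r\<^sup>2 / 2 \<le> p" and x: "- r \<le> x" "x \<le> 0"
  shows "0 \<le> lower_defect (5/6) r p x"
proof -
  define A where "A = p * (p / 2 + 25/72) - (1 - r) * (2 + r + r\<^sup>2 / 4)"
  define b where "b = p * (35/72 - p / 2)"
  have "0 \<le> (p\<^sup>2 + r * A) + (A + b * r) * (- x) + b * (- x)\<^sup>2"
  proof (rule quadratic_nonneg_on_interval)
    show "0 \<le> - x" "- x \<le> r" using x by auto
    show "0 \<le> p\<^sup>2 + r * A"
      using lower_defect_at_0_ineq[OF r p] by (simp add: A_def algebra_simps power2_eq_square)
    show "0 \<le> p\<^sup>2 + r * A + (A + b * r) * r + b * r\<^sup>2"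
      using lower_defect_at_minus_r_ineq[OF r p] by (simp add: A_def b_def algebra_simps power2_eq_square)
    show "0 \<le> 2 * (p\<^sup>2 + r * A) + (A + b * r) * r"
      using lower_defect_left_mid_ineq[OF r p]
      by (simp add: A_def b_def field_simps power2_eq_square power3_eq_cube)
  qed
  also have "\<dots> = lower_defect (5/6) r p x"
    by (simp add: lower_defect_def A_def b_def field_simps power2_eq_square)
  finally show ?thesis .
qed

lemma lower_defect_nonneg_right:
  fixes r p x :: real
  assumes r: "0 \<le> r" "r \<le> 1" and p: "1 - r\<^sup>2 / 2 \<le> p" and x: "0 \<le> x" "x \<le> r"
  shows "0 \<le> lower_defect (1 + r / 2) r p x"
proof -
  define A where "A = p * (p / 2 + 25/72) - (1 - r) * (2 + r + r\<^sup>2 / 4)"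
  define b where "b = p * (47/72 + r / 2 - p / 2)"
  have "0 \<le> p\<^sup>2 + (A - b * r) * (r - x) + b * (r - x)\<^sup>2"
  proof (rule quadratic_nonneg_on_interval)
    show "0 \<le> r - x" "r - x \<le> r" using x by auto
    show "0 \<le> p\<^sup>2" by simp
    show "0 \<le> p\<^sup>2 + (A - b * r) * r + b * r\<^sup>2"
      using lower_defect_at_0_ineq[OF r p] by (simp add: A_def b_def algebra_simps power2_eq_square)
    show "0 \<le> 2 * p\<^sup>2 + (A - b * r) * r"
      using lower_defect_right_mid_ineq[OF r p]
      by (simp add: A_def b_def field_simps power2_eq_square power3_eq_cube)
  qed
  also have "\<dots> = lower_defect (1 + r / 2) r p x"
    by (simp add: lower_defect_def A_def b_def field_simps power2_eq_square)
  finally show ?thesis .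
qed

lemma sin_sinh_slope_with_nonneg_defect:
  fixes x y r p :: real
  assumes x: "\<bar>x\<bar> \<le> r" and y: "0 \<le> y" "y \<le> r" and r: "r \<le> 1" and p: "1 - r\<^sup>2 / 2 \<le> p"
  obtains s where "y * sin x * sinh y \<le> s * x * y\<^sup>2" "0 \<le> lower_defect s r p x"
proof (cases "x \<le> 0")
  case True
  show ?thesis
  proof
    show "y * sin x * sinh y \<le> 5/6 * x * y\<^sup>2"
      using sin_mult_sinh_le_of_nonpos[of x y] True x y r by auto
    show "0 \<le> lower_defect (5/6) r p x"
      using lower_defect_nonneg_left[of r p x] True x r p by auto
  qed
next
  case False
  show ?thesis
  proof
    have "x * y\<^sup>2 * (1 + y / 2) \<le> x * y\<^sup>2 * (1 + r / 2)"
      using False y by (intro mult_left_mono) auto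
    then show "y * sin x * sinh y \<le> (1 + r / 2) * x * y\<^sup>2"
      using order_trans[OF sin_mult_sinh_le_of_nonneg[of x y]] False y r by (simp add: mult_ac)
    show "0 \<le> lower_defect (1 + r / 2) r p x"
      using lower_defect_nonneg_right[of r p x] False x r p by auto
  qed
qed

lemma lower_estimate_cross_multiplied:
  fixes x y r :: real
  assumes circle: "x\<^sup>2 + y\<^sup>2 = r\<^sup>2" and y: "0 \<le> y" and r: "0 \<le> r" "r \<le> 1"
  shows "(1 - r) * ((cos x)\<^sup>2 + (sinh y)\<^sup>2)
           \<le> cos r * ((1 + x) * cos x * cosh y - y * sin x * sinh y)"
proof -
  define p where "p = cos r"
  have "x\<^sup>2 \<le> r\<^sup>2" "y\<^sup>2 \<le> r\<^sup>2" using circle zero_le_power2[of x] zero_le_power2[of y] by linarith+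
  then have x: "\<bar>x\<bar> \<le> r" and y_le: "y \<le> r"
    using r power2_le_imp_le[of "\<bar>x\<bar>" r] power2_le_imp_le[of y r] by simp_all
  have p: "1 - r\<^sup>2 / 2 \<le> p" using cos_ge_one_minus_square_half[of r] by (simp add: p_def)
  obtain s where sin_sinh: "y * sin x * sinh y \<le> s * x * y\<^sup>2"
    and defect: "0 \<le> lower_defect s r p x"
    using sin_sinh_slope_with_nonneg_defect[OF x y y_le r(2) p] .
  have "(1 + x) * (p * (1 + y\<^sup>2 / 2) + 25/72 * y\<^sup>2) \<le> (1 + x) * (cos x * cosh y)"
    using cos_mult_cosh_ge[OF circle x r(2)] x r by (intro mult_left_mono) (auto simp: p_def)
  then have N: "(1 + x) * (p * (1 + y\<^sup>2 / 2) + 25/72 * y\<^sup>2) - s * x * y\<^sup>2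
                  \<le> (1 + x) * cos x * cosh y - y * sin x * sinh y"
    using sin_sinh by (simp add: algebra_simps)
  have D: "(1 - r) * ((cos x)\<^sup>2 + (sinh y)\<^sup>2) \<le> (1 - r) * (p\<^sup>2 + y\<^sup>2 * (2 + r + r\<^sup>2 / 4))"
    using cos_square_plus_sinh_square_le[OF circle x y y_le r(2)] r
    by (intro mult_left_mono) (auto simp: p_def)
  have "0 \<le> p" using r pi_gt3 by (auto simp: p_def intro!: cos_ge_zero)
  moreover have "0 \<le> (r + x) * lower_defect s r p x" using x defect by simp
  ultimately show ?thesis
    using lower_estimate_eq_lower_defect[of "y\<^sup>2" r x p s] circle D mult_left_mono[OF N, of p]
    by (simp add: p_def algebra_simps)
qed

lemma Re_cos_eq_cos_cosh: "Re (cos z) = cos (Re z) * cosh (Im z)"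
  by (simp add: Re_cos cosh_field_def)

lemma Im_cos_eq_sin_sinh: "Im (cos z) = - sin (Re z) * sinh (Im z)"
  by (simp add: Im_cos sinh_field_def field_simps)

lemma Re_phi_nc:
  "Re (phi_nc z) = ((1 + Re z) * cos (Re z) * cosh (Im z) - Im z * sin (Re z) * sinh (Im z))
                   / ((cos (Re z))\<^sup>2 + (sinh (Im z))\<^sup>2)"
proof -
  have "(Re (cos z))\<^sup>2 + (Im (cos z))\<^sup>2 = (cos (Re z))\<^sup>2 + (sinh (Im z))\<^sup>2"
    by (simp add: Re_cos_eq_cos_cosh Im_cos_eq_sin_sinh cosh_square_eq
        sin_squared_eq algebra_simps)
  then show ?thesis
    by (simp add: phi_nc_def Re_divide Re_cos_eq_cos_cosh Im_cos_eq_sin_sinh)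
qed

lemma phi_nc_cnj: "phi_nc (cnj z) = cnj (phi_nc z)"
  by (simp add: phi_nc_def cnj_cos)

lemma phi_nc_of_real: "phi_nc (complex_of_real t) = complex_of_real ((1 + t) / cos t)"
  by (simp add: phi_nc_def cos_of_real)

lemma Re_phi_nc_ge_of_Im_nonneg:
  assumes "cmod z = r" "0 \<le> Im z" "r \<le> 1"
  shows "(1 - r) / cos r \<le> Re (phi_nc z)"
proof -
  have "(Re z)\<^sup>2 + (Im z)\<^sup>2 = r\<^sup>2" using assms(1) cmod_power2[of z] by simp
  then have "(1 - r) * ((cos (Re z))\<^sup>2 + (sinh (Im z))\<^sup>2)
               \<le> cos r * ((1 + Re z) * cos (Re z) * cosh (Im z) - Im z * sin (Re z) * sinh (Im z))"
    using assms by (intro lower_estimate_cross_multiplied) auto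
  moreover have "0 < cos r" and "0 < cos (Re z)"
    using assms abs_Re_le_cmod[of z] pi_gt3 by (auto intro!: cos_gt_zero_pi)
  ultimately show ?thesis
    by (simp add: Re_phi_nc field_simps add_pos_nonneg)
qed

lemma Re_phi_nc_ge:
  assumes "cmod z = r" "r \<le> 1"
  shows "(1 - r) / cos r \<le> Re (phi_nc z)"
proof (cases "0 \<le> Im z")
  case True
  then show ?thesis using Re_phi_nc_ge_of_Im_nonneg assms by blast
next
  case False
  then have "(1 - r) / cos r \<le> Re (phi_nc (cnj z))"
    using assms by (intro Re_phi_nc_ge_of_Im_nonneg) auto
  then show ?thesis by (simp add: phi_nc_cnj)
qed

lemma Re_phi_nc_le:
  assumes "cmod z = r" "r < pi / 2"
  shows "Re (phi_nc z) \<le> (1 + r) / cos r"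
proof -
  have "0 \<le> r" using assms(1) by auto
  then have "0 < cos r" using assms by (intro cos_gt_zero_pi) auto
  have "0 \<le> cos \<bar>Re z\<bar>" using assms abs_Re_le_cmod[of z] by (intro cos_ge_zero) auto
  have "cos r \<le> cos \<bar>Re z\<bar>"
    using assms abs_Re_le_cmod[of z] by (intro cos_monotone_0_pi_le) auto
  also have "\<dots> \<le> cos \<bar>Re z\<bar> * cosh (Im z)"
    using mult_left_mono[OF cosh_real_ge_1 \<open>0 \<le> cos \<bar>Re z\<bar>\<close>] by simp
  also have "\<dots> = Re (cos z)" by (simp add: Re_cos_eq_cos_cosh)
  also have "\<dots> \<le> cmod (cos z)" by (rule complex_Re_le_cmod)
  finally have "cos r \<le> cmod (cos z)" .
  moreover have "cmod (1 + z) \<le> 1 + r" using norm_triangle_ineq[of 1 z] assms by simp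
  ultimately have "cmod (1 + z) / cmod (cos z) \<le> (1 + r) / cos r"
    using \<open>0 \<le> r\<close> \<open>0 < cos r\<close> by (intro frac_le) auto
  then show ?thesis
    using complex_Re_le_cmod[of "phi_nc z"] by (simp add: phi_nc_def norm_divide)
qed

theorem mainTheorem2:
  fixes r :: real
  assumes "0 < r" and "r < 1"
  shows "phi_nc (- complex_of_real r) \<in> \<real> \<and>
         (\<forall>z. cmod z = r \<longrightarrow> Re (phi_nc (- complex_of_real r)) \<le> Re (phi_nc z)) \<and>
         phi_nc (complex_of_real r) \<in> \<real> \<and>
         (\<forall>z. cmod z = r \<longrightarrow> Re (phi_nc z) \<le> Re (phi_nc (complex_of_real r)))"
proof -
  have "phi_nc (- complex_of_real r) = complex_of_real ((1 - r) / cos r)"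
    using phi_nc_of_real[of "- r"] by simp
  moreover have "r < pi / 2" using assms pi_gt3 by linarith
  ultimately show ?thesis
    using Re_phi_nc_ge[of _ r] Re_phi_nc_le[of _ r] assms by (auto simp: phi_nc_of_real)
qed

end
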